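(* Let $a\in\mathbb{C}$ with $|a|\le 1$ and let $m$ be a positive integer. Let $\omega_\pm(\cdot,m)$ be real-analytic functions of $\theta\in\mathbb{R}$ satisfying $$\cos(\omega_\pm(\theta,m))=\begin{cases}|a|^m\cos(m(\theta+\arg a)), & m\text{ odd},\\ -|a|^m\cos(m(\theta+\arg a))+(-1)^{m/2}(|a|^m-1), & m\text{ even}.\end{cases}$$ Then $$\max_{\theta}|\partial_\theta\omega_\pm(\theta,m)|=\begin{cases} m|a|^m, & m\text{ odd},\\ m|a|^{m/2}, & m\text{ even}.\end{cases}$$
   Context: The functions $\omega_\pm(\theta,m)$ are the dispersion relations (eigenphases of the Fourier symbol) of the $m$-th power of an electric shift-coin quantum walk with coin $\begin{bmatrix}a&b\\-\bar b&\bar a\end{bmatrix}$, $|a|^2+|b|^2=1$; analytic choices of these eigenphase functions exist. *)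

theory Defs
  imports "HOL-Analysis.Analysis"
begin

definition real_analytic :: "(real \<Rightarrow> real) \<Rightarrow> bool" where
  "real_analytic f \<longleftrightarrow>
     (\<forall>x0. \<exists>c :: nat \<Rightarrow> real. \<exists>r > 0.
        \<forall>x. \<bar>x - x0\<bar> < r \<longrightarrow> (\<lambda>n. c n * (x - x0) ^ n) sums f x)"

definition disp_cos :: "complex \<Rightarrow> nat \<Rightarrow> real \<Rightarrow> real" where
  "disp_cos a m \<theta> =
     (if odd m then cmod a ^ m * cos (real m * (\<theta> + Arg a))
      else - (cmod a ^ m * cos (real m * (\<theta> + Arg a)))
           + (-1) ^ (m div 2) * (cmod a ^ m - 1))"

end

theory Submission
  imports Defs
begin

text \<open>Write the dispersion relation as cos (\<omega> \<theta>) = A u + B with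
  u = cos (m (\<theta> + arg a)). Differentiating it gives
  \<omega>'^2 (1 - (A u + B)^2) = A^2 m^2 (1 - u^2), which controls |\<omega>'| wherever
  |A u + B| < 1. At a point where A u + B = e = \<plusminus>1, the function e cos \<omega> is maximal,
  so the addition theorem gives 1 - cos (\<omega> (\<theta> + h) - \<omega> \<theta>) = e A u (1 - cos (m h));
  comparing half-angle sines as h \<rightarrow> 0 yields |\<omega>'| = m \<surd>(e A u) there.
  Maximizing both expressions over u gives m |a|^m for odd m, attained at u = 0, and
  m |a|^(m/2) for even m, attained at the extremal points u = \<plusminus>1.\<close>

lemma real_analytic_has_real_derivative:
  assumes "real_analytic f"
  shows "(f has_real_derivative deriv f x) (at x)"
proof -
  obtain c r where r: "r > 0"
    and series: "\<And>y. \<bar>y - x\<bar> < r \<Longrightarrow> (\<lambda>n. c n * (y - x) ^ n) sums f y"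
    using assms unfolding real_analytic_def by blast
  have "summable (\<lambda>n. c n * (r / 2) ^ n)"
    using series[of "x + r / 2"] r by (simp add: sums_iff)
  then have "((\<lambda>t. \<Sum>n. c n * t ^ n) has_real_derivative (\<Sum>n. diffs c n * 0 ^ n)) (at (x - x))"
    using termdiffs_strong[of c "r / 2" 0] r by simp
  moreover have "((\<lambda>y. y - x) has_real_derivative 1) (at x)"
    by (auto intro!: derivative_eq_intros)
  ultimately have "((\<lambda>y. \<Sum>n. c n * (y - x) ^ n) has_real_derivative (\<Sum>n. diffs c n * 0 ^ n)) (at x)"
    using DERIV_chain2 by fastforce
  then have "(f has_real_derivative (\<Sum>n. diffs c n * 0 ^ n)) (at x)"
  proof (rule has_field_derivative_transform_within_open[of _ _ _ "ball x r"])
    show "(\<Sum>n. c n * (y - x) ^ n) = f y" if "y \<in> ball x r" for y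
      using series[of y] that by (simp add: sums_iff dist_real_def abs_minus_commute)
  qed (use r in auto)
  then show ?thesis
    using DERIV_imp_deriv by metis
qed

lemma deriv_sq_mult_sin_sq_of_cos_eq:
  fixes \<omega> F :: "real \<Rightarrow> real"
  assumes "(\<omega> has_real_derivative D) (at x)" and "(F has_real_derivative F') (at x)"
    and cos_eq: "\<And>y. cos (\<omega> y) = F y"
  shows "D\<^sup>2 * (1 - (F x)\<^sup>2) = F'\<^sup>2"
proof -
  have "((\<lambda>y. cos (\<omega> y)) has_real_derivative - sin (\<omega> x) * D) (at x)"
    using assms(1) by (auto intro!: derivative_eq_intros)
  then have "- sin (\<omega> x) * D = F'"
    using assms(2) DERIV_unique unfolding cos_eq by blast
  then have "D\<^sup>2 * (sin (\<omega> x))\<^sup>2 = F'\<^sup>2"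
    by (auto simp: power_mult_distrib)
  then show ?thesis
    using cos_eq[of x] by (simp add: sin_squared_eq)
qed

lemma abs_deriv_of_cos_increment:
  fixes \<omega> :: "real \<Rightarrow> real"
  assumes D: "(\<omega> has_real_derivative D) (at x)"
    and increment: "\<And>h. 1 - cos (\<omega> (x + h) - \<omega> x) = K * (1 - cos (m * h))"
  shows "\<bar>D\<bar> = sqrt K * \<bar>m\<bar>"
proof -
  have half_angle: "1 - cos t = 2 * (sin (t / 2))\<^sup>2" for t :: real
    using cos_double_sin[of "t / 2"] by simp
  have "\<bar>sin ((\<omega> (x + h) - \<omega> x) / 2)\<bar> = sqrt K * \<bar>sin (m * h / 2)\<bar>" for h
  proof -
    have "(sin ((\<omega> (x + h) - \<omega> x) / 2))\<^sup>2 = K * (sin (m * h / 2))\<^sup>2"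
      using increment[of h] unfolding half_angle by simp
    then show ?thesis
      by (metis real_sqrt_abs real_sqrt_mult)
  qed
  then have quotient_eq: "\<bar>sin ((\<omega> (x + h) - \<omega> x) / 2) / h\<bar> = sqrt K * \<bar>sin (m * (x + h - x) / 2) / h\<bar>" for h
    by (simp add: abs_divide)
  have "((\<lambda>y. sin ((\<omega> y - \<omega> x) / 2)) has_real_derivative cos ((\<omega> x - \<omega> x) / 2) * (D / 2)) (at x)"
    using D by (auto intro!: derivative_eq_intros)
  then have "((\<lambda>h. sin ((\<omega> (x + h) - \<omega> x) / 2) / h) \<longlongrightarrow> D / 2) (at 0)"
    unfolding DERIV_def by simp
  then have lim1: "((\<lambda>h. \<bar>sin ((\<omega> (x + h) - \<omega> x) / 2) / h\<bar>) \<longlongrightarrow> \<bar>D / 2\<bar>) (at 0)"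
    by (rule tendsto_rabs)
  have "((\<lambda>y. sin (m * (y - x) / 2)) has_real_derivative cos (m * (x - x) / 2) * (m / 2)) (at x)"
    by (auto intro!: derivative_eq_intros)
  then have "((\<lambda>h. sin (m * (x + h - x) / 2) / h) \<longlongrightarrow> m / 2) (at 0)"
    unfolding DERIV_def by simp
  then have lim2: "((\<lambda>h. \<bar>sin ((\<omega> (x + h) - \<omega> x) / 2) / h\<bar>) \<longlongrightarrow> sqrt K * \<bar>m / 2\<bar>) (at 0)"
    unfolding quotient_eq by (intro tendsto_mult_left tendsto_rabs)
  have "\<bar>D / 2\<bar> = sqrt K * \<bar>m / 2\<bar>"
    using tendsto_unique[OF _ lim1 lim2] by simp
  then show ?thesis
    by simp
qed

lemma cos_increment_at_extremum:
  fixes \<omega> :: "real \<Rightarrow> real"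
  assumes cos_eq: "\<And>y. cos (\<omega> y) = A * cos (m * (y + p)) + B"
    and extremal: "(A * cos (m * (x + p)) + B)\<^sup>2 = 1"
  shows "1 - cos (\<omega> (x + h) - \<omega> x)
           = (A * cos (m * (x + p)) + B) * A * cos (m * (x + p)) * (1 - cos (m * h))"
proof -
  define u where "u = cos (m * (x + p))"
  define s where "s = sin (m * (x + p))"
  define e where "e = A * u + B"
  have ee: "e * e = 1"
    using extremal unfolding e_def u_def by (simp add: power2_eq_square)
  have "e * (A * cos (m * (y + p)) + B) \<le> 1" for y
  proof -
    have "\<bar>e * cos (\<omega> y)\<bar> \<le> 1"
      using ee abs_cos_le_one[of "\<omega> y"] by (simp add: abs_mult abs_square_eq_1 flip: power2_eq_square)
    then show ?thesis
      using cos_eq[of y] by simp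
  qed
  moreover have "((\<lambda>y. e * (A * cos (m * (y + p)) + B)) has_real_derivative e * (- A * s * m)) (at x)"
    unfolding s_def by (auto intro!: derivative_eq_intros)
  ultimately have "e * (- A * s * m) = 0"
    using ee by (intro DERIV_local_max[of _ _ x 1]) (auto simp: e_def u_def)
  then have "A * s * sin (m * h) = 0"
    using ee by auto
  moreover have "cos (\<omega> (x + h)) = A * (u * cos (m * h) - s * sin (m * h)) + B"
  proof -
    have "m * (x + h + p) = m * (x + p) + m * h"
      by (simp add: algebra_simps)
    then show ?thesis
      using cos_eq[of "x + h"] unfolding u_def s_def by (simp add: cos_add)
  qed
  ultimately have "cos (\<omega> (x + h)) = A * u * cos (m * h) + B"
    by (simp add: right_diff_distrib mult.assoc)
  moreover have "cos (\<omega> x) = e" and "sin (\<omega> x) = 0"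
    using cos_eq[of x] ee sin_squared_eq[of "\<omega> x"] unfolding e_def u_def
    by (simp_all add: power2_eq_square)
  ultimately have "cos (\<omega> (x + h) - \<omega> x) = e * (A * u * cos (m * h) + B)"
    by (simp add: cos_diff)
  then show ?thesis
    using ee unfolding e_def u_def by (simp add: algebra_simps)
qed

lemma abs_deriv_le_of_cos_eq:
  fixes \<omega> :: "real \<Rightarrow> real"
  assumes D: "(\<omega> has_real_derivative D) (at x)"
    and cos_eq: "\<And>y. cos (\<omega> y) = A * cos (m * (y + p)) + B"
    and "M \<ge> 0"
    and regular: "\<And>u. \<bar>u\<bar> \<le> 1 \<Longrightarrow> \<bar>A * u + B\<bar> \<le> 1 \<Longrightarrow>
                   A\<^sup>2 * m\<^sup>2 * (1 - u\<^sup>2) \<le> M\<^sup>2 * (1 - (A * u + B)\<^sup>2)"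
    and critical: "\<And>u. \<bar>u\<bar> \<le> 1 \<Longrightarrow> (A * u + B)\<^sup>2 = 1 \<Longrightarrow>
                   sqrt ((A * u + B) * A * u) * \<bar>m\<bar> \<le> M"
  shows "\<bar>D\<bar> \<le> M"
proof -
  define u where "u = cos (m * (x + p))"
  have u: "\<bar>u\<bar> \<le> 1"
    unfolding u_def by simp
  have F: "\<bar>A * u + B\<bar> \<le> 1"
    using cos_eq[of x] unfolding u_def by (metis abs_cos_le_one)
  show ?thesis
  proof (cases "(A * u + B)\<^sup>2 = 1")
    case True
    have "\<bar>D\<bar> = sqrt ((A * u + B) * A * u) * \<bar>m\<bar>"
      using abs_deriv_of_cos_increment[OF D cos_increment_at_extremum[OF cos_eq]] True
      unfolding u_def by blast
    then show ?thesis
      using critical[OF u True] by simp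
  next
    case False
    then have "1 - (A * u + B)\<^sup>2 > 0"
      using F by (simp add: abs_square_le_1 less_le)
    have "((\<lambda>y. A * cos (m * (y + p)) + B) has_real_derivative - A * sin (m * (x + p)) * m) (at x)"
      by (auto intro!: derivative_eq_intros)
    from deriv_sq_mult_sin_sq_of_cos_eq[OF D this cos_eq]
    have "D\<^sup>2 * (1 - (A * u + B)\<^sup>2) = A\<^sup>2 * m\<^sup>2 * (1 - u\<^sup>2)"
      unfolding u_def by (simp add: power_mult_distrib sin_squared_eq)
    also have "\<dots> \<le> M\<^sup>2 * (1 - (A * u + B)\<^sup>2)"
      using regular[OF u F] .
    finally have "D\<^sup>2 \<le> M\<^sup>2"
      using \<open>1 - (A * u + B)\<^sup>2 > 0\<close> by simp
    then show ?thesis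
      using \<open>M \<ge> 0\<close> by (metis abs_le_square_iff abs_of_nonneg)
  qed
qed

lemma max_abs_deriv_cos_eq_scaled_cos:
  fixes \<omega> :: "real \<Rightarrow> real"
  assumes deriv: "\<And>y. (\<omega> has_real_derivative deriv \<omega> y) (at y)"
    and cos_eq: "\<And>y. cos (\<omega> y) = c * cos (m * (y + p))"
    and "0 \<le> c" "c \<le> 1" "m \<noteq> 0"
  shows "(\<forall>y. \<bar>deriv \<omega> y\<bar> \<le> \<bar>m\<bar> * c) \<and> (\<exists>y. \<bar>deriv \<omega> y\<bar> = \<bar>m\<bar> * c)"
proof
  have cos_eq': "\<And>y. cos (\<omega> y) = c * cos (m * (y + p)) + 0"
    using cos_eq by simp
  show "\<forall>y. \<bar>deriv \<omega> y\<bar> \<le> \<bar>m\<bar> * c"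
  proof
    fix y
    show "\<bar>deriv \<omega> y\<bar> \<le> \<bar>m\<bar> * c"
    proof (rule abs_deriv_le_of_cos_eq[OF deriv cos_eq'])
      fix u :: real
      assume "\<bar>u\<bar> \<le> 1"
      have "c\<^sup>2 * u\<^sup>2 \<le> u\<^sup>2"
        using \<open>0 \<le> c\<close> \<open>c \<le> 1\<close> by (simp add: mult_left_le_one_le power_le_one)
      then have "c\<^sup>2 * (c\<^sup>2 * u\<^sup>2) * m\<^sup>2 \<le> c\<^sup>2 * u\<^sup>2 * m\<^sup>2"
        by (intro mult_right_mono mult_left_mono) auto
      then show "c\<^sup>2 * m\<^sup>2 * (1 - u\<^sup>2) \<le> (\<bar>m\<bar> * c)\<^sup>2 * (1 - (c * u + 0)\<^sup>2)"
        by (simp add: power_mult_distrib algebra_simps)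
      have "\<bar>c * u\<bar> \<le> c"
        using \<open>\<bar>u\<bar> \<le> 1\<close> \<open>0 \<le> c\<close> by (simp add: abs_mult mult_left_le)
      moreover have "sqrt ((c * u + 0) * c * u) = \<bar>c * u\<bar>"
        by (metis add_0_right mult.assoc power2_eq_square real_sqrt_abs)
      ultimately show "sqrt ((c * u + 0) * c * u) * \<bar>m\<bar> \<le> \<bar>m\<bar> * c"
        by (metis abs_ge_zero mult.commute mult_left_mono)
    qed (use \<open>0 \<le> c\<close> in simp)
  qed
  define t where "t = pi / (2 * m) - p"
  have "((\<lambda>y. c * cos (m * (y + p))) has_real_derivative - c * sin (m * (t + p)) * m) (at t)"
    by (auto intro!: derivative_eq_intros)
  from deriv_sq_mult_sin_sq_of_cos_eq[OF deriv this cos_eq]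
  have "(deriv \<omega> t)\<^sup>2 = (\<bar>m\<bar> * c)\<^sup>2"
    using \<open>m \<noteq> 0\<close> unfolding t_def by (simp add: power_mult_distrib)
  then show "\<exists>y. \<bar>deriv \<omega> y\<bar> = \<bar>m\<bar> * c"
    using \<open>0 \<le> c\<close> by (metis abs_mult_pos abs_ge_zero power2_abs power2_eq_iff_nonneg)
qed

lemma max_abs_deriv_cos_eq_shifted_cos:
  fixes \<omega> :: "real \<Rightarrow> real"
  assumes deriv: "\<And>y. (\<omega> has_real_derivative deriv \<omega> y) (at y)"
    and cos_eq: "\<And>y. cos (\<omega> y) = - c * cos (m * (y + p)) + s * (c - 1)"
    and s: "s = 1 \<or> s = -1" and "0 \<le> c" "c \<le> 1" "m \<noteq> 0"
  shows "(\<forall>y. \<bar>deriv \<omega> y\<bar> \<le> \<bar>m\<bar> * sqrt c) \<and> (\<exists>y. \<bar>deriv \<omega> y\<bar> = \<bar>m\<bar> * sqrt c)"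
proof
  have M_sq: "(\<bar>m\<bar> * sqrt c)\<^sup>2 = m\<^sup>2 * c"
    using \<open>0 \<le> c\<close> by (simp add: power_mult_distrib)
  show "\<forall>y. \<bar>deriv \<omega> y\<bar> \<le> \<bar>m\<bar> * sqrt c"
  proof
    fix y
    show "\<bar>deriv \<omega> y\<bar> \<le> \<bar>m\<bar> * sqrt c"
    proof (rule abs_deriv_le_of_cos_eq[OF deriv cos_eq])
      fix u :: real
      assume "\<bar>u\<bar> \<le> 1"
      let ?F = "- c * u + s * (c - 1)"
      have "1 - ?F\<^sup>2 - c * (1 - u\<^sup>2) = c * (1 - c) * (1 - s * u)\<^sup>2"
        using s by (auto simp: power2_eq_square algebra_simps)
      also have "\<dots> \<ge> 0"
        using \<open>0 \<le> c\<close> \<open>c \<le> 1\<close> by simp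
      finally have "c * (1 - u\<^sup>2) \<le> 1 - ?F\<^sup>2"
        by simp
      then have "m\<^sup>2 * c * (c * (1 - u\<^sup>2)) \<le> m\<^sup>2 * c * (1 - ?F\<^sup>2)"
        using \<open>0 \<le> c\<close> by (intro mult_left_mono) auto
      then show "(- c)\<^sup>2 * m\<^sup>2 * (1 - u\<^sup>2) \<le> (\<bar>m\<bar> * sqrt c)\<^sup>2 * (1 - ?F\<^sup>2)"
        unfolding M_sq by (simp add: power2_eq_square algebra_simps)
      assume "?F\<^sup>2 = 1"
      have "?F * (- c) * u \<le> \<bar>?F\<bar> * c * \<bar>u\<bar>"
        using \<open>0 \<le> c\<close> by (metis abs_ge_self abs_minus_cancel abs_mult abs_of_nonneg)
      also have "\<dots> \<le> c"
        using \<open>?F\<^sup>2 = 1\<close> \<open>\<bar>u\<bar> \<le> 1\<close> \<open>0 \<le> c\<close> by (simp add: abs_square_eq_1 mult_left_le)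
      finally show "sqrt (?F * (- c) * u) * \<bar>m\<bar> \<le> \<bar>m\<bar> * sqrt c"
        by (simp add: mult.commute mult_left_mono)
    qed (simp add: \<open>0 \<le> c\<close>)
  qed
  define t where "t = (if s = 1 then 0 else pi / m) - p"
  have "cos (m * (t + p)) = s"
    using s \<open>m \<noteq> 0\<close> unfolding t_def by auto
  then have "(- c * cos (m * (t + p)) + s * (c - 1))\<^sup>2 = 1"
    using s by auto
  from abs_deriv_of_cos_increment[OF deriv cos_increment_at_extremum[OF cos_eq this]]
  have "\<bar>deriv \<omega> t\<bar> = \<bar>m\<bar> * sqrt c"
    using \<open>cos (m * (t + p)) = s\<close> s by (auto simp: algebra_simps)
  then show "\<exists>y. \<bar>deriv \<omega> y\<bar> = \<bar>m\<bar> * sqrt c" ..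
qed

theorem lemma3p1:
  fixes a :: complex and m :: nat and \<omega> :: "real \<Rightarrow> real"
  assumes "cmod a \<le> 1" and "m \<ge> 1"
    and "real_analytic \<omega>"
    and "\<And>\<theta>. cos (\<omega> \<theta>) = disp_cos a m \<theta>"
  shows "(\<forall>\<theta>. \<bar>deriv \<omega> \<theta>\<bar> \<le> (if odd m then real m * cmod a ^ m else real m * cmod a ^ (m div 2)))
       \<and> (\<exists>\<theta>. \<bar>deriv \<omega> \<theta>\<bar> = (if odd m then real m * cmod a ^ m else real m * cmod a ^ (m div 2)))"
proof -
  define c where "c = cmod a ^ m"
  have "0 \<le> c" "c \<le> 1" "real m \<noteq> 0"
    using assms(1,2) unfolding c_def by (auto simp: power_le_one)
  have deriv: "\<And>\<theta>. (\<omega> has_real_derivative deriv \<omega> \<theta>) (at \<theta>)"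
    using real_analytic_has_real_derivative[OF assms(3)] .
  show ?thesis
  proof (cases "odd m")
    case True
    have "\<And>\<theta>. cos (\<omega> \<theta>) = c * cos (real m * (\<theta> + Arg a))"
      using assms(4) True unfolding disp_cos_def c_def by simp
    from max_abs_deriv_cos_eq_scaled_cos[OF deriv this \<open>0 \<le> c\<close> \<open>c \<le> 1\<close> \<open>real m \<noteq> 0\<close>]
    show ?thesis
      using True unfolding c_def by simp
  next
    case False
    have "\<And>\<theta>. cos (\<omega> \<theta>) = - c * cos (real m * (\<theta> + Arg a)) + (-1) ^ (m div 2) * (c - 1)"
      using assms(4) False unfolding disp_cos_def c_def by simp
    moreover have "(-1) ^ (m div 2) = (1::real) \<or> (-1) ^ (m div 2) = (-1::real)"
      by (metis neg_one_even_power neg_one_odd_power)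
    ultimately have "(\<forall>\<theta>. \<bar>deriv \<omega> \<theta>\<bar> \<le> real m * sqrt c) \<and> (\<exists>\<theta>. \<bar>deriv \<omega> \<theta>\<bar> = real m * sqrt c)"
      using max_abs_deriv_cos_eq_shifted_cos[OF deriv _ _ \<open>0 \<le> c\<close> \<open>c \<le> 1\<close> \<open>real m \<noteq> 0\<close>] by simp
    moreover have "sqrt c = cmod a ^ (m div 2)"
    proof -
      have "c = (cmod a ^ (m div 2))\<^sup>2"
        using False unfolding c_def by (simp flip: power_mult)
      then show ?thesis
        by simp
    qed
    ultimately show ?thesis
      using False by simp
  qed
qed

end
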